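(* Let $(M,\Sigma)$ be a measurable space, $r\ge1$, and $\mu_1,\dots,\mu_r$ non-atomic countably additive finite (nonnegative) measures on $\Sigma$. Then for every measurable set $S$ and every index $k\in\{1,\dots,r\}$ there is a measurable subset $H\subseteq S$ with $\mu_k(H)\ge 2^{-(r-1)}\mu_k(S)$ on which there exists a strong solution, i.e. a partition $H=F_1\sqcup\dots\sqcup F_r$ into measurable sets with $\mu_i(F_i)\ge\mu_i(F_j)$ for all $i,j$.
   Context: Partition elements may be empty. A measure is non-atomic if every measurable set of positive measure contains a measurable subset of strictly smaller positive measure. *)

theory Defs
  imports "HOL-Analysis.Analysis"
begin

definition non_atomic :: "'a measure \<Rightarrow> bool" where
  "non_atomic N \<longleftrightarrow>
     (\<forall>A \<in> sets N. 0 < emeasure N A \<longrightarrow>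
        (\<exists>B \<in> sets N. B \<subseteq> A \<and> 0 < emeasure N B \<and> emeasure N B < emeasure N A))"

end

theory Submission
  imports Defs
begin

(*
  Finitely many finite non-atomic measures on a common sigma algebra can be halved
  simultaneously. This goes by induction on the number of measures: given a map h halving
  every measurable set for the measures mu i (i in J) and a further measure nu, a bisection
  search keeps disjoint K, U, W inside S with
    mu i U = mu i W = mu i S / 2^(n+1),  mu i K = mu i S / 2 - mu i S / 2^(n+1),
    nu (K Un W) <= nu S / 2 <= nu (K Un U),
  and in each step moves one half of U or of W into K, depending on which choice preserves
  the nu-sandwich. In the limit K has the right mu-measures, and the nu-mass still missing
  lies in a set that is null for every mu i, from which Sierpinski's intermediate value
  theorem for non-atomic measures supplies it exactly.

  Iterated halving splits S into 2^(r-1) >= r pieces on each of which every mu i has mass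
  2^-(r-1) mu i S. Any r of them form a strong solution, all its inequalities being
  equalities.
*)

lemma (in finite_measure) non_atomic_measure_less:
  assumes "non_atomic M" and A: "A \<in> sets M" and pos: "0 < measure M A"
  shows "\<exists>B\<in>sets M. B \<subseteq> A \<and> 0 < measure M B \<and> measure M B < measure M A"
proof -
  have "0 < emeasure M A"
    using A pos by (simp add: emeasure_eq_measure)
  then obtain B where "B \<in> sets M" "B \<subseteq> A" "0 < emeasure M B" "emeasure M B < emeasure M A"
    using assms(1) A unfolding non_atomic_def by blast
  then show ?thesis
    using A by (auto simp: emeasure_eq_measure ennreal_less_iff)
qed

lemma (in finite_measure) non_atomic_half_subset:
  assumes "non_atomic M" and A: "A \<in> sets M" and pos: "0 < measure M A"
  shows "\<exists>B\<in>sets M. B \<subseteq> A \<and> 0 < measure M B \<and> measure M B \<le> measure M A / 2"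
proof -
  obtain B where B: "B \<in> sets M" "B \<subseteq> A" "0 < measure M B" "measure M B < measure M A"
    using non_atomic_measure_less[OF assms] by blast
  have diff: "measure M (A - B) = measure M A - measure M B"
    using A B by (simp add: finite_measure_Diff)
  show ?thesis
  proof (cases "measure M B \<le> measure M A / 2")
    case True
    with B show ?thesis by blast
  next
    case False
    with A B diff show ?thesis
      by (intro bexI[of _ "A - B"]) auto
  qed
qed

lemma (in finite_measure) non_atomic_small_subset:
  assumes na: "non_atomic M" and A: "A \<in> sets M" and pos: "0 < measure M A" and e: "0 < e"
  shows "\<exists>E\<in>sets M. E \<subseteq> A \<and> 0 < measure M E \<and> measure M E < e"
proof -
  have halving: "\<exists>E\<in>sets M. E \<subseteq> A \<and> 0 < measure M E \<and> measure M E \<le> measure M A / 2^n" for n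
  proof (induction n)
    case 0
    then show ?case using A pos by auto
  next
    case (Suc n)
    then obtain E where E: "E \<in> sets M" "E \<subseteq> A" "0 < measure M E" "measure M E \<le> measure M A / 2^n"
      by blast
    then obtain B where "B \<in> sets M" "B \<subseteq> E" "0 < measure M B" "measure M B \<le> measure M E / 2"
      using non_atomic_half_subset[OF na] by blast
    moreover have "measure M E / 2 \<le> measure M A / 2 ^ Suc n"
      using E(4) by (simp add: divide_right_mono)
    ultimately show ?case
      using E(2) by (meson order_trans)
  qed
  obtain n :: nat where "measure M A / e < 2^n"
    using real_arch_pow[of 2] by auto
  then have "measure M A / 2^n < e"
    using e by (simp add: field_simps)
  then show ?thesis
    using halving[of n] by (meson order_le_less_trans)
qed

lemma (in finite_measure) exists_half_maximal_subset:
  assumes V: "V \<in> sets M" and b: "0 \<le> b"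
  shows "\<exists>C\<in>sets M. C \<subseteq> V \<and> measure M C \<le> b \<and>
    (\<forall>E\<in>sets M. E \<subseteq> V \<longrightarrow> measure M E \<le> b \<longrightarrow> measure M E \<le> 2 * measure M C)"
proof -
  define fits where "fits = {C \<in> sets M. C \<subseteq> V \<and> measure M C \<le> b}"
  define s where "s = (SUP C\<in>fits. measure M C)"
  have bdd: "bdd_above (measure M ` fits)"
    by (rule bdd_aboveI[of _ "measure M (space M)"]) (auto simp: fits_def intro!: bounded_measure)
  have empty: "{} \<in> fits"
    using b by (auto simp: fits_def)
  have below_s: "measure M E \<le> s" if "E \<in> sets M" "E \<subseteq> V" "measure M E \<le> b" for E
    unfolding s_def using that bdd by (intro cSUP_upper) (auto simp: fits_def)
  show ?thesis
  proof (cases "s \<le> 0")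
    case True
    then have "measure M E \<le> 2 * measure M {}" if "E \<in> sets M" "E \<subseteq> V" "measure M E \<le> b" for E
      using below_s[OF that] by simp
    then show ?thesis
      using b by (intro bexI[of _ "{}"]) auto
  next
    case False
    then have "s / 2 < s"
      by simp
    then obtain C where C: "C \<in> fits" "s / 2 < measure M C"
      unfolding s_def using less_cSUP_iff[OF _ bdd] empty by blast
    then have "measure M E \<le> 2 * measure M C" if "E \<in> sets M" "E \<subseteq> V" "measure M E \<le> b" for E
      using below_s[OF that] by linarith
    with C show ?thesis
      unfolding fits_def by blast
  qed
qed

lemma (in finite_measure) exists_saturated_subset:
  assumes U: "U \<in> sets M" and c: "0 \<le> c"
  shows "\<exists>B\<in>sets M. B \<subseteq> U \<and> measure M B \<le> c \<and>
    (\<forall>E\<in>sets M. E \<subseteq> U - B \<longrightarrow> measure M B + measure M E \<le> c \<longrightarrow> measure M E = 0)"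
proof -
  have "\<exists>C\<in>sets M. C \<subseteq> U - B \<and> measure M C \<le> c - measure M B \<and>
      (\<forall>E\<in>sets M. E \<subseteq> U - B \<longrightarrow> measure M E \<le> c - measure M B \<longrightarrow> measure M E \<le> 2 * measure M C)"
    if "B \<in> sets M" "measure M B \<le> c" for B
    using exists_half_maximal_subset[of "U - B" "c - measure M B"] U that by auto
  then obtain g where g: "\<And>B. B \<in> sets M \<Longrightarrow> measure M B \<le> c \<Longrightarrow>
      g B \<in> sets M \<and> g B \<subseteq> U - B \<and> measure M (g B) \<le> c - measure M B \<and>
      (\<forall>E\<in>sets M. E \<subseteq> U - B \<longrightarrow> measure M E \<le> c - measure M B \<longrightarrow> measure M E \<le> 2 * measure M (g B))"
    by metis
  \<comment> \<open>Greedy exhaustion: each step adds at least half of what could still be added.\<close>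
  define Bs where "Bs n = ((\<lambda>B. B \<union> g B) ^^ n) {}" for n
  have Bs: "Bs n \<in> sets M \<and> Bs n \<subseteq> U \<and> measure M (Bs n) \<le> c \<and>
      measure M (Bs (Suc n)) = measure M (Bs n) + measure M (g (Bs n))" for n
  proof (induction n)
    case 0
    then show ?case
      using c g[of "{}"] by (auto simp: Bs_def)
  next
    case (Suc n)
    with g[of "Bs n"] have "Bs (Suc n) \<in> sets M" "Bs (Suc n) \<subseteq> U" "measure M (Bs (Suc n)) \<le> c"
      by (auto simp: Bs_def)
    with g[of "Bs (Suc n)"] show ?case
      by (auto simp: Bs_def intro!: finite_measure_Union)
  qed
  define B where "B = (\<Union>n. Bs n)"
  have B: "B \<in> sets M" "B \<subseteq> U"
    using Bs unfolding B_def by auto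
  have lim: "(\<lambda>n. measure M (Bs n)) \<longlonglongrightarrow> measure M B"
    unfolding B_def using Bs by (intro finite_Lim_measure_incseq incseq_SucI) (auto simp: Bs_def)
  have "measure M B \<le> c"
    using Bs by (intro LIMSEQ_le_const2[OF lim]) auto
  moreover have "measure M E = 0"
    if E: "E \<in> sets M" "E \<subseteq> U - B" "measure M B + measure M E \<le> c" for E
  proof -
    have "measure M E \<le> 2 * (measure M (Bs (Suc n)) - measure M (Bs n))" for n
    proof -
      have "Bs n \<subseteq> B"
        unfolding B_def by auto
      then have "E \<subseteq> U - Bs n" "measure M E \<le> c - measure M (Bs n)"
        using E B finite_measure_mono[of "Bs n" B] by auto
      then have "measure M E \<le> 2 * measure M (g (Bs n))"
        using g[of "Bs n"] Bs[of n] E(1) by blast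
      then show ?thesis
        using Bs[of n] by simp
    qed
    moreover have "(\<lambda>n. 2 * (measure M (Bs (Suc n)) - measure M (Bs n))) \<longlonglongrightarrow> 2 * (measure M B - measure M B)"
      by (intro tendsto_intros lim LIMSEQ_Suc)
    ultimately have "measure M E \<le> 0"
      by (intro LIMSEQ_le_const) auto
    then show ?thesis
      using measure_nonneg[of M E] by linarith
  qed
  ultimately show ?thesis
    using B by blast
qed

theorem (in finite_measure) non_atomic_intermediate_value:
  assumes na: "non_atomic M" and U: "U \<in> sets M" and c: "0 \<le> c" "c \<le> measure M U"
  shows "\<exists>Z\<in>sets M. Z \<subseteq> U \<and> measure M Z = c"
proof -
  obtain B where B: "B \<in> sets M" "B \<subseteq> U" "measure M B \<le> c"
    and saturated: "\<And>E. E \<in> sets M \<Longrightarrow> E \<subseteq> U - B \<Longrightarrow> measure M B + measure M E \<le> c \<Longrightarrow> measure M E = 0"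
    using exists_saturated_subset[OF U c(1)] by blast
  show ?thesis
  proof (cases "measure M B = c")
    case True
    with B show ?thesis by blast
  next
    case False
    have "measure M (U - B) = measure M U - measure M B"
      using B U by (simp add: finite_measure_Diff)
    then have "0 < measure M (U - B)"
      using False B(3) c by simp
    then obtain E where E: "E \<in> sets M" "E \<subseteq> U - B" "0 < measure M E" "measure M E < c - measure M B"
      using non_atomic_small_subset[OF na, of "U - B" "c - measure M B"] U B False by auto
    then have "measure M E = 0"
      using saturated by simp
    with E(3) show ?thesis by simp
  qed
qed

lemma disjoint_family_on_refine:
  fixes P Q :: "nat \<Rightarrow> 'a set"
  assumes Q: "disjoint_family_on Q {..<n}"
    and sub: "\<And>j. j < 2 * n \<Longrightarrow> P j \<subseteq> Q (j div 2)"
    and siblings: "\<And>j. j < n \<Longrightarrow> P (2 * j) \<inter> P (2 * j + 1) = {}"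
  shows "disjoint_family_on P {..<2 * n}"
  unfolding disjoint_family_on_def
proof (intro ballI impI)
  fix a b assume ab: "a \<in> {..<2 * n}" "b \<in> {..<2 * n}" "a \<noteq> b"
  show "P a \<inter> P b = {}"
  proof (cases "a div 2 = b div 2")
    case True
    with ab(3) have "a = 2 * (a div 2) \<and> b = 2 * (a div 2) + 1 \<or> b = 2 * (a div 2) \<and> a = 2 * (a div 2) + 1"
      by presburger
    with siblings[of "a div 2"] ab(1) show ?thesis
      by auto
  next
    case False
    with Q ab have "Q (a div 2) \<inter> Q (b div 2) = {}"
      by (auto simp: disjoint_family_on_def)
    with sub[of a] sub[of b] ab show ?thesis
      by auto
  qed
qed

definition halves :: "'a measure \<Rightarrow> ('i \<Rightarrow> 'a measure) \<Rightarrow> 'i set \<Rightarrow> 'a set \<Rightarrow> 'a set \<Rightarrow> bool" where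
  "halves M mu I S A \<longleftrightarrow> A \<in> sets M \<and> A \<subseteq> S \<and> (\<forall>i\<in>I. measure (mu i) A = measure (mu i) S / 2)"

locale finite_measure_family =
  fixes M :: "'a measure" and mu :: "'i \<Rightarrow> 'a measure" and I :: "'i set"
  assumes sets_mu [simp]: "i \<in> I \<Longrightarrow> sets (mu i) = sets M"
    and finite_measure_mu: "i \<in> I \<Longrightarrow> finite_measure (mu i)"
begin

lemma finite_measure_family_subset:
  assumes "J \<subseteq> I"
  shows "finite_measure_family M mu J"
  unfolding finite_measure_family_def
proof (intro conjI allI impI)
  fix i assume "i \<in> J"
  with assms show "sets (mu i) = sets M" "finite_measure (mu i)"
    using finite_measure_mu by auto
qed

lemma measure_mu_Un:
  assumes "i \<in> I" "A \<in> sets M" "B \<in> sets M" "A \<inter> B = {}"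
  shows "measure (mu i) (A \<union> B) = measure (mu i) A + measure (mu i) B"
  using finite_measure.finite_measure_Union[OF finite_measure_mu[OF assms(1)]] assms by simp

lemma measure_mu_Diff:
  assumes "i \<in> I" "A \<in> sets M" "B \<in> sets M" "B \<subseteq> A"
  shows "measure (mu i) (A - B) = measure (mu i) A - measure (mu i) B"
  using finite_measure.finite_measure_Diff[OF finite_measure_mu[OF assms(1)]] assms by simp

lemma measure_mu_mono:
  assumes "i \<in> I" "B \<in> sets M" "A \<subseteq> B"
  shows "measure (mu i) A \<le> measure (mu i) B"
  using finite_measure.finite_measure_mono[OF finite_measure_mu[OF assms(1)]] assms by simp

lemma halves_Diff:
  assumes "S \<in> sets M" and "halves M mu I S A"
  shows "halves M mu I S (S - A)"
proof -
  have A: "A \<in> sets M" "A \<subseteq> S" "\<And>i. i \<in> I \<Longrightarrow> measure (mu i) A = measure (mu i) S / 2"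
    using assms(2) by (auto simp: halves_def)
  have "measure (mu i) (S - A) = measure (mu i) S / 2" if "i \<in> I" for i
    using measure_mu_Diff[OF that assms(1) A(1,2)] A(3)[OF that] by simp
  with assms(1) A show ?thesis
    by (auto simp: halves_def)
qed

end

locale bisection = finite_measure_family +
  fixes h :: "'a set \<Rightarrow> 'a set" and \<nu> :: "'a measure" and S :: "'a set"
  assumes halves_h: "T \<in> sets M \<Longrightarrow> halves M mu I T (h T)"
    and sets_\<nu> [simp]: "sets \<nu> = sets M"
    and finite_measure_\<nu>: "finite_measure \<nu>"
    and S: "S \<in> sets M"
begin

definition target :: real where
  "target = measure \<nu> S / 2"

fun bisect_step :: "'a set \<times> 'a set \<times> 'a set \<Rightarrow> 'a set \<times> 'a set \<times> 'a set" where
  "bisect_step (K, U, W) =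
    (if measure \<nu> (K \<union> h U \<union> h W) \<le> target then (K \<union> h U, U - h U, h W)
     else (K \<union> h W, h U, W - h W))"

definition bisect_start :: "'a set \<times> 'a set \<times> 'a set" where
  "bisect_start =
    (if target \<le> measure \<nu> (h S) then ({}, h S, S - h S) else ({}, S - h S, h S))"

definition bisect_inv :: "nat \<Rightarrow> 'a set \<times> 'a set \<times> 'a set \<Rightarrow> bool" where
  "bisect_inv n = (\<lambda>(K, U, W). K \<in> sets M \<and> U \<in> sets M \<and> W \<in> sets M \<and>
     K \<inter> U = {} \<and> K \<inter> W = {} \<and> U \<inter> W = {} \<and> K \<union> U \<union> W \<subseteq> S \<and>
     measure \<nu> (K \<union> W) \<le> target \<and> target \<le> measure \<nu> (K \<union> U) \<and>
     (\<forall>i\<in>I. measure (mu i) U = measure (mu i) S / 2 ^ Suc n \<and>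
            measure (mu i) W = measure (mu i) S / 2 ^ Suc n \<and>
            measure (mu i) K = measure (mu i) S / 2 - measure (mu i) S / 2 ^ Suc n))"

lemma bisect_inv_start: "bisect_inv 0 bisect_start"
proof -
  have hS: "halves M mu I S (h S)" "halves M mu I S (S - h S)"
    using halves_h[OF S] halves_Diff[OF S] by auto
  have "measure \<nu> (S - h S) = measure \<nu> S - measure \<nu> (h S)"
    using hS finite_measure.finite_measure_Diff[OF finite_measure_\<nu>] S by (simp add: halves_def)
  with hS S show ?thesis
    by (auto simp: bisect_start_def bisect_inv_def halves_def target_def)
qed

lemma bisect_inv_step:
  assumes "bisect_inv n (K, U, W)"
  shows "bisect_inv (Suc n) (bisect_step (K, U, W))"
proof -
  have sets: "K \<in> sets M" "U \<in> sets M" "W \<in> sets M"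
    and disj: "K \<inter> U = {}" "K \<inter> W = {}" "U \<inter> W = {}" and sub: "K \<union> U \<union> W \<subseteq> S"
    and \<nu>: "measure \<nu> (K \<union> W) \<le> target" "target \<le> measure \<nu> (K \<union> U)"
    and mu: "\<And>i. i \<in> I \<Longrightarrow> measure (mu i) U = measure (mu i) S / 2 ^ Suc n \<and>
            measure (mu i) W = measure (mu i) S / 2 ^ Suc n \<and>
            measure (mu i) K = measure (mu i) S / 2 - measure (mu i) S / 2 ^ Suc n"
    using assms by (auto simp: bisect_inv_def)
  have hU: "halves M mu I U (h U)" "halves M mu I U (U - h U)"
    and hW: "halves M mu I W (h W)" "halves M mu I W (W - h W)"
    using halves_h halves_Diff sets by auto
  have half: "measure (mu i) S / 2 ^ Suc n / 2 = measure (mu i) S / 2 ^ Suc (Suc n)" for i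
    by simp
  show ?thesis
  proof (cases "measure \<nu> (K \<union> h U \<union> h W) \<le> target")
    case True
    have "measure (mu i) (K \<union> h U) = measure (mu i) K + measure (mu i) (h U)" if "i \<in> I" for i
      using hU disj sets by (intro measure_mu_Un[OF that]) (auto simp: halves_def)
    moreover have "K \<union> h U \<union> (U - h U) = K \<union> U"
      using hU by (auto simp: halves_def)
    ultimately show ?thesis
      using True sets disj sub \<nu> mu hU hW
      by (auto simp: bisect_inv_def halves_def half Un_assoc)
  next
    case False
    have "measure (mu i) (K \<union> h W) = measure (mu i) K + measure (mu i) (h W)" if "i \<in> I" for i
      using hW disj sets by (intro measure_mu_Un[OF that]) (auto simp: halves_def)
    moreover have "K \<union> h W \<union> (W - h W) = K \<union> W" "K \<union> h W \<union> h U = K \<union> h U \<union> h W"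
      using hW by (auto simp: halves_def)
    ultimately show ?thesis
      using False sets disj sub \<nu> mu hU hW
      by (auto simp: bisect_inv_def halves_def half Un_assoc)
  qed
qed

lemma bisect_step_mono:
  assumes "bisect_inv n (K, U, W)" and "bisect_step (K, U, W) = (K', U', W')"
  shows "K \<subseteq> K'" "U' \<subseteq> U"
proof -
  have "h U \<subseteq> U"
    using assms(1) halves_h by (auto simp: bisect_inv_def halves_def)
  with assms(2) show "K \<subseteq> K'" "U' \<subseteq> U"
    by (auto split: if_splits)
qed

definition bisect :: "nat \<Rightarrow> 'a set \<times> 'a set \<times> 'a set" where
  "bisect n = (bisect_step ^^ n) bisect_start"

definition bisect_K :: "nat \<Rightarrow> 'a set" where
  "bisect_K n = fst (bisect n)"

definition bisect_U :: "nat \<Rightarrow> 'a set" where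
  "bisect_U n = fst (snd (bisect n))"

definition bisect_W :: "nat \<Rightarrow> 'a set" where
  "bisect_W n = snd (snd (bisect n))"

definition limit_K :: "'a set" where
  "limit_K = (\<Union>n. bisect_K n)"

definition limit_U :: "'a set" where
  "limit_U = (\<Inter>n. bisect_U n)"

lemma bisect_eq: "bisect n = (bisect_K n, bisect_U n, bisect_W n)"
  by (simp add: bisect_K_def bisect_U_def bisect_W_def)

lemma bisect_inv_bisect: "bisect_inv n (bisect_K n, bisect_U n, bisect_W n)"
proof (induction n)
  case 0
  show ?case
    using bisect_inv_start by (simp add: bisect_def flip: bisect_eq)
next
  case (Suc n)
  have "bisect (Suc n) = bisect_step (bisect n)"
    by (simp add: bisect_def)
  with bisect_inv_step[OF Suc] show ?case
    by (simp add: bisect_eq)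
qed

lemma bisect_facts:
  shows "bisect_K n \<in> sets M" "bisect_U n \<in> sets M" "bisect_W n \<in> sets M"
    and "bisect_K n \<inter> bisect_U n = {}" "bisect_K n \<inter> bisect_W n = {}"
    and "bisect_K n \<union> bisect_U n \<subseteq> S"
    and "measure \<nu> (bisect_K n \<union> bisect_W n) \<le> target" "target \<le> measure \<nu> (bisect_K n \<union> bisect_U n)"
    and "i \<in> I \<Longrightarrow> measure (mu i) (bisect_U n) = measure (mu i) S / 2 ^ Suc n"
    and "i \<in> I \<Longrightarrow> measure (mu i) (bisect_K n) = measure (mu i) S / 2 - measure (mu i) S / 2 ^ Suc n"
  using bisect_inv_bisect[of n] by (auto simp: bisect_inv_def)

lemma bisect_mono: "incseq bisect_K" "decseq bisect_U"
proof -
  have "bisect_K n \<subseteq> bisect_K (Suc n) \<and> bisect_U (Suc n) \<subseteq> bisect_U n" for n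
  proof -
    have "bisect_step (bisect_K n, bisect_U n, bisect_W n) = (bisect_K (Suc n), bisect_U (Suc n), bisect_W (Suc n))"
      by (simp add: bisect_def flip: bisect_eq)
    with bisect_step_mono[OF bisect_inv_bisect] show ?thesis
      by blast
  qed
  then show "incseq bisect_K" "decseq bisect_U"
    by (auto intro: incseq_SucI decseq_SucI)
qed

lemma limit_facts: "limit_K \<in> sets M" "limit_U \<in> sets M" "limit_K \<inter> limit_U = {}" "limit_K \<union> limit_U \<subseteq> S"
proof -
  show "limit_K \<in> sets M" "limit_U \<in> sets M"
    using bisect_facts unfolding limit_K_def limit_U_def by auto
  show "limit_K \<inter> limit_U = {}" "limit_K \<union> limit_U \<subseteq> S"
    using bisect_facts(4,6) unfolding limit_K_def limit_U_def by blast+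
qed

lemma tendsto_measure_bisect:
  assumes "finite_measure N" "sets N = sets M"
  shows "(\<lambda>n. measure N (bisect_K n)) \<longlonglongrightarrow> measure N limit_K"
    and "(\<lambda>n. measure N (bisect_U n)) \<longlonglongrightarrow> measure N limit_U"
  unfolding limit_K_def limit_U_def using assms bisect_facts bisect_mono
  by (auto intro!: finite_measure.finite_Lim_measure_incseq finite_measure.finite_Lim_measure_decseq)

lemma measure_\<nu>_limit: "measure \<nu> limit_K \<le> target" "target \<le> measure \<nu> limit_K + measure \<nu> limit_U"
proof -
  interpret \<nu>: finite_measure \<nu>
    by (rule finite_measure_\<nu>)
  have "measure \<nu> (bisect_K n) \<le> target" for n
    using bisect_facts(1,3,7)[of n] \<nu>.finite_measure_mono[of "bisect_K n" "bisect_K n \<union> bisect_W n"]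
    by simp
  then show "measure \<nu> limit_K \<le> target"
    by (intro LIMSEQ_le_const2[OF tendsto_measure_bisect(1)[OF finite_measure_\<nu>]]) auto
  have "target \<le> measure \<nu> (bisect_K n) + measure \<nu> (bisect_U n)" for n
    using bisect_facts(1,2,4,8)[of n] \<nu>.finite_measure_Union[of "bisect_K n" "bisect_U n"]
    by simp
  then show "target \<le> measure \<nu> limit_K + measure \<nu> limit_U"
    using tendsto_measure_bisect[OF finite_measure_\<nu> sets_\<nu>]
    by (intro LIMSEQ_le_const[OF tendsto_add]) auto
qed

lemma measure_mu_limit:
  assumes i: "i \<in> I"
  shows "measure (mu i) limit_K = measure (mu i) S / 2" "measure (mu i) limit_U = 0"
proof -
  note lim = tendsto_measure_bisect[OF finite_measure_mu[OF i] sets_mu[OF i]]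
  have vanish: "(\<lambda>n. measure (mu i) S / 2 ^ Suc n) \<longlonglongrightarrow> 0"
    using LIMSEQ_divide_realpow_zero[of 2 "measure (mu i) S"] by (rule LIMSEQ_Suc) simp
  then have "(\<lambda>n. measure (mu i) S / 2 - measure (mu i) S / 2 ^ Suc n) \<longlonglongrightarrow> measure (mu i) S / 2 - 0"
    by (intro tendsto_diff tendsto_const)
  with lim(1) show "measure (mu i) limit_K = measure (mu i) S / 2"
    using bisect_facts(10)[OF i] by (auto dest: LIMSEQ_unique)
  from lim(2) vanish show "measure (mu i) limit_U = 0"
    using bisect_facts(9)[OF i] by (auto dest: LIMSEQ_unique)
qed

theorem exists_halving:
  assumes "non_atomic \<nu>"
  shows "\<exists>A. halves M mu I S A \<and> measure \<nu> A = measure \<nu> S / 2"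
proof -
  \<comment> \<open>The missing \<nu>-mass is taken from \<open>limit_U\<close>, which is null for every \<open>mu i\<close>.\<close>
  obtain Z where Z: "Z \<in> sets M" "Z \<subseteq> limit_U" "measure \<nu> Z = target - measure \<nu> limit_K"
    using finite_measure.non_atomic_intermediate_value[OF finite_measure_\<nu> assms,
        of limit_U "target - measure \<nu> limit_K"]
      limit_facts(2) measure_\<nu>_limit by auto
  define A where "A = limit_K \<union> Z"
  have "measure N A = measure N limit_K + measure N Z" if "finite_measure N" "sets N = sets M" for N
    using finite_measure.finite_measure_Union[OF that(1)] limit_facts Z that(2) by (auto simp: A_def)
  moreover have "measure (mu i) Z = 0" if "i \<in> I" for i
    using measure_mu_mono[OF that limit_facts(2) Z(2)] measure_mu_limit(2)[OF that] measure_nonneg[of "mu i" Z]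
    by linarith
  moreover have "A \<in> sets M" "A \<subseteq> S"
    using limit_facts Z by (auto simp: A_def)
  ultimately have "halves M mu I S A" "measure \<nu> A = measure \<nu> S / 2"
    using Z measure_mu_limit(1) finite_measure_\<nu> finite_measure_mu by (auto simp: halves_def target_def)
  then show ?thesis
    by blast
qed

end

context finite_measure_family
begin

theorem simultaneous_halving:
  assumes "finite J" "J \<subseteq> I" "\<And>j. j \<in> J \<Longrightarrow> non_atomic (mu j)" "S \<in> sets M"
  shows "\<exists>A. halves M mu J S A"
  using assms
proof (induction J arbitrary: S rule: finite_induct)
  case empty
  then show ?case
    by (auto simp: halves_def)
next
  case (insert j J)
  then have "\<exists>A. halves M mu J T A" if "T \<in> sets M" for T
    using that by auto
  then obtain h where h: "\<And>T. T \<in> sets M \<Longrightarrow> halves M mu J T (h T)"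
    by metis
  have j: "sets (mu j) = sets M" "finite_measure (mu j)" "non_atomic (mu j)"
    using insert.prems finite_measure_mu by auto
  interpret bisection M mu J h "mu j" S
  proof (intro bisection.intro bisection_axioms.intro finite_measure_family_subset)
    show "J \<subseteq> I" "S \<in> sets M"
      using insert.prems by auto
  qed (use h j in auto)
  obtain A where "halves M mu J S A" "measure (mu j) A = measure (mu j) S / 2"
    using exists_halving[OF j(3)] by blast
  then show ?case
    by (auto simp: halves_def)
qed

lemma dyadic_partition:
  assumes halving: "\<And>T. T \<in> sets M \<Longrightarrow> \<exists>A. halves M mu I T A" and S: "S \<in> sets M"
  shows "\<exists>P :: nat \<Rightarrow> 'a set. (\<forall>j<2^m. P j \<in> sets M \<and> P j \<subseteq> S) \<and> disjoint_family_on P {..<2^m} \<and>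
    (\<forall>i\<in>I. \<forall>j<2^m. measure (mu i) (P j) = measure (mu i) S / 2^m)"
proof (induction m)
  case 0
  show ?case
    using S by (intro exI[of _ "\<lambda>_. S"]) (auto simp: disjoint_family_on_def)
next
  case (Suc m)
  then obtain Q :: "nat \<Rightarrow> 'a set" where Q: "\<And>j. j < 2^m \<Longrightarrow> Q j \<in> sets M \<and> Q j \<subseteq> S"
    "disjoint_family_on Q {..<2^m}"
    "\<And>i j. i \<in> I \<Longrightarrow> j < 2^m \<Longrightarrow> measure (mu i) (Q j) = measure (mu i) S / 2^m"
    by blast
  obtain h where h: "\<And>T. T \<in> sets M \<Longrightarrow> halves M mu I T (h T)"
    using halving by metis
  define P where "P j = (if even j then h (Q (j div 2)) else Q (j div 2) - h (Q (j div 2)))" for j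
  have P: "halves M mu I (Q (j div 2)) (P j)" if "j < 2 * 2^m" for j
    using h halves_Diff Q(1)[of "j div 2"] that unfolding P_def by auto
  have "disjoint_family_on P {..<2 * 2^m}"
  proof (rule disjoint_family_on_refine[OF Q(2)])
    show "P j \<subseteq> Q (j div 2)" if "j < 2 * 2^m" for j
      using P[OF that] by (simp add: halves_def)
    show "P (2 * j) \<inter> P (2 * j + 1) = {}" for j
      by (auto simp: P_def)
  qed
  moreover have "P j \<in> sets M \<and> P j \<subseteq> S" if "j < 2 * 2^m" for j
  proof -
    have "Q (j div 2) \<subseteq> S"
      using Q(1)[of "j div 2"] that by auto
    with P[OF that] show ?thesis
      by (auto simp: halves_def)
  qed
  moreover have "measure (mu i) (P j) = measure (mu i) S / (2 * 2^m)" if "i \<in> I" "j < 2 * 2^m" for i j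
    using P[OF that(2)] Q(3)[OF that(1), of "j div 2"] that by (auto simp: halves_def)
  ultimately show ?case
    unfolding power_Suc by blast
qed

lemma equal_measure_pieces:
  assumes halving: "\<And>T. T \<in> sets M \<Longrightarrow> \<exists>A. halves M mu I T A" and S: "S \<in> sets M"
    and n: "n \<le> 2^m"
  shows "\<exists>F :: nat \<Rightarrow> 'a set. (\<forall>j\<in>{1..n}. F j \<in> sets M \<and> F j \<subseteq> S) \<and> disjoint_family_on F {1..n} \<and>
    (\<forall>i\<in>I. \<forall>j\<in>{1..n}. measure (mu i) (F j) = measure (mu i) S / 2^m)"
proof -
  obtain P :: "nat \<Rightarrow> 'a set" where P: "\<forall>j<2^m. P j \<in> sets M \<and> P j \<subseteq> S"
    "disjoint_family_on P {..<2^m}" "\<forall>i\<in>I. \<forall>j<2^m. measure (mu i) (P j) = measure (mu i) S / 2^m"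
    using dyadic_partition[OF halving S] by blast
  define F where "F j = P (j - 1)" for j
  have idx: "j - 1 < 2^m" if "j \<in> {1..n}" for j
    using that n by auto
  have "disjoint_family_on F {1..n}"
    unfolding disjoint_family_on_def
  proof (intro ballI impI)
    fix a b assume ab: "a \<in> {1..n}" "b \<in> {1..n}" "a \<noteq> b"
    then have "a - 1 \<noteq> b - 1"
      by auto
    with P(2) idx[OF ab(1)] idx[OF ab(2)] show "F a \<inter> F b = {}"
      unfolding disjoint_family_on_def F_def by blast
  qed
  moreover have "\<forall>j\<in>{1..n}. F j \<in> sets M \<and> F j \<subseteq> S"
    using P(1) idx by (simp add: F_def)
  moreover have "\<forall>i\<in>I. \<forall>j\<in>{1..n}. measure (mu i) (F j) = measure (mu i) S / 2^m"
    using P(3) idx by (simp add: F_def)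
  ultimately show ?thesis
    by blast
qed

end

theorem lemma3:
  fixes M :: "'a measure" and mu :: "nat \<Rightarrow> 'a measure" and r k :: nat and S :: "'a set"
  assumes r: "r \<ge> 1"
    and sets_mu: "\<And>i. i \<in> {1..r} \<Longrightarrow> sets (mu i) = sets M"
    and fin: "\<And>i. i \<in> {1..r} \<Longrightarrow> finite_measure (mu i)"
    and na: "\<And>i. i \<in> {1..r} \<Longrightarrow> non_atomic (mu i)"
    and S: "S \<in> sets M"
    and k: "k \<in> {1..r}"
  shows "\<exists>H \<in> sets M. H \<subseteq> S \<and>
           measure (mu k) H \<ge> (1/2) ^ (r - 1) * measure (mu k) S \<and>
           (\<exists>F :: nat \<Rightarrow> 'a set.
              (\<forall>i \<in> {1..r}. F i \<in> sets M) \<and>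
              disjoint_family_on F {1..r} \<and>
              (\<Union>i \<in> {1..r}. F i) = H \<and>
              (\<forall>i \<in> {1..r}. \<forall>j \<in> {1..r}. measure (mu i) (F i) \<ge> measure (mu i) (F j)))"
proof -
  interpret finite_measure_family M mu "{1..r}"
    by (rule finite_measure_family.intro[OF sets_mu fin])
  have halving: "\<exists>A. halves M mu {1..r} T A" if "T \<in> sets M" for T
    by (rule simultaneous_halving[OF finite_atLeastAtMost order_refl na that])
  have "r \<le> 2^(r-1)"
    using less_exp[of "r - 1"] r by linarith
  then obtain F :: "nat \<Rightarrow> 'a set" where F: "\<forall>j\<in>{1..r}. F j \<in> sets M \<and> F j \<subseteq> S"
    "disjoint_family_on F {1..r}"
    "\<forall>i\<in>{1..r}. \<forall>j\<in>{1..r}. measure (mu i) (F j) = measure (mu i) S / 2^(r-1)"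
    using equal_measure_pieces[OF halving S] by blast
  define H where "H = (\<Union>i \<in> {1..r}. F i)"
  have H: "H \<in> sets M" "H \<subseteq> S"
    using F(1) unfolding H_def by (auto intro: sets.finite_UN)
  have "(1/2)^(r-1) * measure (mu k) S = measure (mu k) (F k)"
    using F(3) k by (simp add: power_one_over)
  also have "\<dots> \<le> measure (mu k) H"
    using k H(1) by (intro measure_mu_mono) (auto simp: H_def)
  finally have "(1/2)^(r-1) * measure (mu k) S \<le> measure (mu k) H" .
  moreover have "\<forall>i\<in>{1..r}. \<forall>j\<in>{1..r}. measure (mu i) (F i) \<ge> measure (mu i) (F j)"
    using F(3) by simp
  ultimately show ?thesis
    using H F(1,2) by (intro bexI[of _ H] conjI exI[of _ F]) (simp_all add: H_def)
qed

end
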